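(* Suppose Assumption (A) and either Assumption (C1) or Assumption (C2) below hold. Let $x\in \mathbf{X}$, $\beta\in \mathcal{P}^{\mathbf{Y}}(x)$ and $V$ be a bounded solution of the Bellman equation $$\inf_{a\in \mathbf{A}^{g}(x)} \Big\{ -\eta V(x) + \int_{\mathbf{X}} V(\tilde x) \overline{q}(d\tilde x | x,a) -V(x) \overline q (\mathbf{X}|x,a) + C^{g}(x,a) \Big\} \wedge \inf_{a\in \mathbf{A}^{i}(x)} \Big\{ -V(x) + \int_{\mathbf{X}} V(\tilde x) Q(d\tilde x | x,a) +c^{i}(x,a) \Big\} = 0,\quad x\in\mathbf{X}.$$ Then $$-\eta V(x) +\int_{\mathbf{X}} \int_{\mathbf{Y}} \big[V(\overline{x}(y)) +C^{i}(y) \big] \beta(dy | z) \overline{q}(dz| x,a) -V(x) \overline{q}(\mathbf{X}| x,a) +C^{g}(x,a) \geq 0$$ for any $(x,a)\in \mathbb{K}^{g}$.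
   Context: Continuous-time MDP with impulsive and gradual controls. $\mathbf{X}$, $\mathbf{A}=\mathbf{A}^i\cup\mathbf{A}^g$ (disjoint) Borel; $\mathbf{A}^g(x),\mathbf{A}^i(x)$ admissible actions; $\mathbb{K}^g=\{(x,a):a\in\mathbf{A}^g(x)\}$, $\mathbb{X}^i=\{x:\mathbf{A}^i(x)\ne\emptyset\}$, $\mathbb{K}^i=\{(x,a):a\in\mathbf{A}^i(x)\}$; $Q$ stochastic kernel on $\mathbf{X}$ given $\mathbb{K}^i$; $\overline q(\Gamma|x,a)=q(\Gamma\setminus\{x\}|x,a)$ for the transition-rate kernel $q$ on $\mathbb{K}^g$; $C^g$ cost rate, $c^i$ impulse cost, $\eta>0$ discount. $\mathbf{Y}$ is the set of intervention sequences $y=(x_0,a_0,\dots,x_k,a_k,x_{k+1},\Delta,\Delta,\dots)$, $\overline x(y)=x_{k+1}$, $C^i(y)=\sum_k c^i(x_k,a_k)$. Randomized interventions are strategic measures $\beta^b(\cdot|\cdot)$ of policies $b$ (in the discrete-time impulse MDP driven by $Q$, with stopping action $\Delta$) satisfying $\beta^b(\mathbf{Y}|x)=1$; $\mathcal{P}^{\mathbf{Y}}$ denotes the set of such kernels and $\mathcal{P}^{\mathbf{Y}}(x)$ their sections at $x$ (here $\beta$ is used as a kernel $\beta(dy|z)$). Assumption (A): there is $K$ with $\overline q(\mathbf{X}|x,a^g)\le K$, $|C^g(x,a^g)|\le K$, $c^i(x,a^i)\ge0$ for all admissible $a^g,a^i$. Assumption (C1): $\mathbb{K}^g$, $\mathbb{K}^i$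 open in $\mathbf{X}\times\mathbf{A}^g$, $\mathbb{X}^i\times\mathbf{A}^i$; for continuous bounded $F$, $\int F(z)\overline q(dz|x,a)$ and $\int F(z)Q(dz|x,a)$ continuous on $\mathbb{K}^g$, $\mathbb{K}^i$; $C^g$, $c^i$ upper semicontinuous. Assumption (C2): $\mathbf{A}^g$, $\mathbf{A}^i$ compact; $\mathbb{K}^g$, $\mathbb{K}^i$ closed in $\mathbf{X}\times\mathbf{A}^g$, $\mathbb{X}^i\times\mathbf{A}^i$; same continuity of the integrals; $C^g$, $c^i$ lower semicontinuous. *)

theory Defs
  imports "HOL-Probability.Probability"
begin

definition usc_on :: "'b::topological_space set \<Rightarrow> ('b \<Rightarrow> real) \<Rightarrow> bool" where
  "usc_on S f \<longleftrightarrow> (\<forall>t. openin (top_of_set S) {p \<in> S. f p < t})"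

definition lsc_on :: "'b::topological_space set \<Rightarrow> ('b \<Rightarrow> real) \<Rightarrow> bool" where
  "lsc_on S f \<longleftrightarrow> (\<forall>t. openin (top_of_set S) {p \<in> S. t < f p})"

text \<open>Integral of an extended-real valued function: positive part minus negative part
  (the usual Lebesgue integral; it may take the value +infinity when the negative part is finite).\<close>

definition ext_integral :: "'b measure \<Rightarrow> ('b \<Rightarrow> ereal) \<Rightarrow> ereal" where
  "ext_integral M f =
     enn2ereal (\<integral>\<^sup>+ z. e2ennreal (f z) \<partial>M) - enn2ereal (\<integral>\<^sup>+ z. e2ennreal (- f z) \<partial>M)"

definition XM :: "'x::topological_space set \<Rightarrow> 'x measure" where
  "XM Xs = restrict_space borel Xs"

definition Kset :: "'x set \<Rightarrow> ('x \<Rightarrow> 'a set) \<Rightarrow> ('x \<times> 'a) set" where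
  "Kset Xs Ax = {(x, a). x \<in> Xs \<and> a \<in> Ax x}"

definition Xi_set :: "'x set \<Rightarrow> ('x \<Rightarrow> 'a set) \<Rightarrow> 'x set" where
  "Xi_set Xs Aix = {x \<in> Xs. Aix x \<noteq> {}}"

text \<open>Adjoin the cemetery / stopping point Delta, represented by None.\<close>

definition optM :: "'b measure \<Rightarrow> 'b option measure" where
  "optM M = sigma (insert None (Some ` space M)) (insert {None} ((`) Some ` sets M))"

text \<open>Trajectories (x_0,a_0,x_1,a_1,...) of the impulse MDP, with states in X + {Delta}
  and actions in A^i + {Delta}.\<close>

type_synonym ('x, 'a) traj = "nat \<Rightarrow> 'x option \<times> 'a option"

definition trajM :: "'x::topological_space set \<Rightarrow> 'a::topological_space set \<Rightarrow> ('x, 'a) traj measure" where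
  "trajM Xs Ai = PiM UNIV (\<lambda>_. optM (XM Xs) \<Otimes>\<^sub>M optM (restrict_space borel Ai))"

text \<open>Two trajectories share the history h_n = (x_0,a_0,...,x_n).\<close>

definition hist_eq :: "nat \<Rightarrow> ('x, 'a) traj \<Rightarrow> ('x, 'a) traj \<Rightarrow> bool" where
  "hist_eq n \<omega> \<omega>' \<longleftrightarrow> (\<forall>j<n. \<omega> j = \<omega>' j) \<and> fst (\<omega> n) = fst (\<omega>' n)"

definition is_policy ::
  "'x::topological_space set \<Rightarrow> 'a::topological_space set \<Rightarrow> ('x \<Rightarrow> 'a set)
   \<Rightarrow> (nat \<Rightarrow> ('x, 'a) traj \<Rightarrow> 'a option measure) \<Rightarrow> bool" where
  "is_policy Xs Ai Aix b \<longleftrightarrow>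
     (\<forall>n. b n \<in> trajM Xs Ai \<rightarrow>\<^sub>M prob_algebra (optM (restrict_space borel Ai))) \<and>
     (\<forall>n \<omega> \<omega>'. hist_eq n \<omega> \<omega>' \<longrightarrow> b n \<omega> = b n \<omega>') \<and>
     (\<forall>n. \<forall>\<omega>\<in>space (trajM Xs Ai).
        (\<forall>x. fst (\<omega> n) = Some x \<longrightarrow> (AE a in b n \<omega>. a = None \<or> (\<exists>a'. a = Some a' \<and> a' \<in> Aix x))) \<and>
        (fst (\<omega> n) = None \<longrightarrow> (AE a in b n \<omega>. a = None)))"

definition imp_trans ::
  "'x::topological_space set \<Rightarrow> ('x \<times> 'a) set \<Rightarrow> ('x \<Rightarrow> 'a \<Rightarrow> 'x measure)
   \<Rightarrow> 'x option \<times> 'a option \<Rightarrow> 'x option measure" where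
  "imp_trans Xs Ki Q s =
     (case s of
        (Some x, Some a) \<Rightarrow>
          if (x, a) \<in> Ki then distr (Q x a) (optM (XM Xs)) Some else return (optM (XM Xs)) None
      | _ \<Rightarrow> return (optM (XM Xs)) None)"

text \<open>P is the strategic measure of policy b from the initial state z (characterised by the
  initial distribution and the two conditional-distribution identities of Ionescu-Tulcea).\<close>

definition is_strategic ::
  "'x::topological_space set \<Rightarrow> 'a::topological_space set \<Rightarrow> ('x \<times> 'a) set
   \<Rightarrow> ('x \<Rightarrow> 'a \<Rightarrow> 'x measure) \<Rightarrow> (nat \<Rightarrow> ('x, 'a) traj \<Rightarrow> 'a option measure)
   \<Rightarrow> 'x \<Rightarrow> ('x, 'a) traj measure \<Rightarrow> bool" where
  "is_strategic Xs Ai Ki Q b z P \<longleftrightarrow>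
     sets P = sets (trajM Xs Ai) \<and> prob_space P \<and>
     (AE \<omega> in P. fst (\<omega> 0) = Some z) \<and>
     (\<forall>n g B. g \<in> borel_measurable (trajM Xs Ai) \<longrightarrow> bounded (range g) \<longrightarrow>
        (\<forall>\<omega> \<omega>'. hist_eq n \<omega> \<omega>' \<longrightarrow> g \<omega> = g \<omega>') \<longrightarrow>
        B \<in> sets (optM (restrict_space borel Ai)) \<longrightarrow>
        (\<integral>\<omega>. g \<omega> * indicator B (snd (\<omega> n)) \<partial>P) = (\<integral>\<omega>. g \<omega> * measure (b n \<omega>) B \<partial>P)) \<and>
     (\<forall>n g B. g \<in> borel_measurable (trajM Xs Ai) \<longrightarrow> bounded (range g) \<longrightarrow>
        (\<forall>\<omega> \<omega>'. (\<forall>j\<le>n. \<omega> j = \<omega>' j) \<longrightarrow> g \<omega> = g \<omega>') \<longrightarrow>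
        B \<in> sets (optM (XM Xs)) \<longrightarrow>
        (\<integral>\<omega>. g \<omega> * indicator B (fst (\<omega> (Suc n))) \<partial>P)
          = (\<integral>\<omega>. g \<omega> * measure (imp_trans Xs Ki Q (\<omega> n)) B \<partial>P))"

text \<open>The set Y of intervention sequences (x_0,a_0,...,x_k,a_k,x_(k+1),Delta,Delta,...);
  here k is the number of impulses (k = 0 allowed: (x_0,Delta,...)).\<close>

definition Yset :: "'x set \<Rightarrow> 'a set \<Rightarrow> ('x, 'a) traj set" where
  "Yset Xs Ai = {\<omega>. \<exists>k.
      (\<forall>j<k. \<exists>x a. \<omega> j = (Some x, Some a) \<and> x \<in> Xs \<and> a \<in> Ai) \<and>
      (\<exists>x\<in>Xs. \<omega> k = (Some x, None)) \<and>
      (\<forall>j>k. \<omega> j = (None, None))}"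

definition ystop :: "('x, 'a) traj \<Rightarrow> nat" where
  "ystop \<omega> = (LEAST k. snd (\<omega> k) = None)"

definition xbar :: "('x, 'a) traj \<Rightarrow> 'x" where
  "xbar \<omega> = the (fst (\<omega> (ystop \<omega>)))"

definition Ci :: "('x \<Rightarrow> 'a \<Rightarrow> real) \<Rightarrow> ('x, 'a) traj \<Rightarrow> real" where
  "Ci ci \<omega> = (\<Sum>j<ystop \<omega>. ci (the (fst (\<omega> j))) (the (snd (\<omega> j))))"

definition rand_intervention ::
  "'x::topological_space set \<Rightarrow> 'a::topological_space set \<Rightarrow> ('x \<Rightarrow> 'a set)
   \<Rightarrow> ('x \<Rightarrow> 'a \<Rightarrow> 'x measure) \<Rightarrow> ('x \<Rightarrow> ('x, 'a) traj measure) \<Rightarrow> bool" where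
  "rand_intervention Xs Ai Aix Q \<beta> \<longleftrightarrow>
     (\<exists>b. is_policy Xs Ai Aix b \<and>
          (\<forall>z\<in>Xs. is_strategic Xs Ai (Kset Xs Aix) Q b z (\<beta> z) \<and>
                   emeasure (\<beta> z) (Yset Xs Ai) = 1))"

definition kernel_on :: "'x::topological_space set \<Rightarrow> ('x \<times> 'a::topological_space) set
   \<Rightarrow> ('x \<Rightarrow> 'a \<Rightarrow> 'x measure) \<Rightarrow> bool" where
  "kernel_on Xs K k \<longleftrightarrow>
     (\<forall>(x, a)\<in>K. sets (k x a) = sets (XM Xs) \<and> finite_measure (k x a)) \<and>
     (\<forall>\<Gamma>\<in>sets (XM Xs). (\<lambda>p. emeasure (k (fst p) (snd p)) \<Gamma>) \<in> borel_measurable (restrict_space borel K))"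

definition AssumptionA where
  "AssumptionA Xs Agx Aix qbar Cg ci \<longleftrightarrow>
     (\<exists>K::real. (\<forall>(x, a)\<in>Kset Xs Agx. measure (qbar x a) Xs \<le> K \<and> \<bar>Cg x a\<bar> \<le> K) \<and>
       (\<forall>(x, a)\<in>Kset Xs Aix. 0 \<le> ci x a))"

definition AssumptionC1 where
  "AssumptionC1 Xs Ag Ai Agx Aix qbar Q Cg ci \<longleftrightarrow>
     openin (top_of_set (Xs \<times> Ag)) (Kset Xs Agx) \<and>
     openin (top_of_set (Xi_set Xs Aix \<times> Ai)) (Kset Xs Aix) \<and>
     (\<forall>F::_ \<Rightarrow> real. continuous_on Xs F \<longrightarrow> bounded (F ` Xs) \<longrightarrow>
        continuous_on (Kset Xs Agx) (\<lambda>(x, a). \<integral>z. F z \<partial>qbar x a) \<and>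
        continuous_on (Kset Xs Aix) (\<lambda>(x, a). \<integral>z. F z \<partial>Q x a)) \<and>
     usc_on (Kset Xs Agx) (\<lambda>(x, a). Cg x a) \<and> usc_on (Kset Xs Aix) (\<lambda>(x, a). ci x a)"

definition AssumptionC2 where
  "AssumptionC2 Xs Ag Ai Agx Aix qbar Q Cg ci \<longleftrightarrow>
     compact Ag \<and> compact Ai \<and>
     closedin (top_of_set (Xs \<times> Ag)) (Kset Xs Agx) \<and>
     closedin (top_of_set (Xi_set Xs Aix \<times> Ai)) (Kset Xs Aix) \<and>
     (\<forall>F::_ \<Rightarrow> real. continuous_on Xs F \<longrightarrow> bounded (F ` Xs) \<longrightarrow>
        continuous_on (Kset Xs Agx) (\<lambda>(x, a). \<integral>z. F z \<partial>qbar x a) \<and>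
        continuous_on (Kset Xs Aix) (\<lambda>(x, a). \<integral>z. F z \<partial>Q x a)) \<and>
     lsc_on (Kset Xs Agx) (\<lambda>(x, a). Cg x a) \<and> lsc_on (Kset Xs Aix) (\<lambda>(x, a). ci x a)"

end

theory Submission
  imports Defs
begin

(* By the Bellman equation both infima are nonnegative. The impulse part gives
   V(x) <= int V dQ(.|x,a) + c^i(x,a) for every admissible impulse, so along the impulse MDP driven
   by the policy of beta, the impulse costs paid so far plus V at the current state (frozen once
   the intervention stops) have nondecreasing expectation, starting from V(z). As beta(.|z) is
   concentrated on finite intervention sequences, this quantity eventually equals
   V(xbar(y)) + C^i(y) and is dominated by it plus sup V, so the reverse Fatou lemma yields
   int [V(xbar(y)) + C^i(y)] beta(dy|z) >= V(z). Integrating in z against qbar(.|x,a) and using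
   the gradual part of the Bellman equation gives the claim. V is shifted by a bound so that all
   these quantities are nonnegative; the impulse costs may have infinite expectation. *)

section \<open>Measurability with the cemetery point Delta\<close>

lemma optM_generator_closed: "insert {None} ((`) Some ` sets M) \<subseteq> Pow (insert None (Some ` space M))"
  using sets.sets_into_space by auto

lemma space_optM: "space (optM M) = insert None (Some ` space M)"
  unfolding optM_def by (rule space_measure_of[OF optM_generator_closed])

lemma sets_optM:
  "sets (optM M) = sigma_sets (insert None (Some ` space M)) (insert {None} ((`) Some ` sets M))"
  unfolding optM_def by (rule sets_measure_of[OF optM_generator_closed])

lemma None_in_sets_optM: "{None} \<in> sets (optM M)"
  unfolding sets_optM by (rule sigma_sets.Basic) simp

lemma Some_image_in_sets_optM: "A \<in> sets M \<Longrightarrow> Some ` A \<in> sets (optM M)"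
  unfolding sets_optM by (rule sigma_sets.Basic) simp

lemma measurable_case_option_optM:
  assumes f: "f \<in> M \<rightarrow>\<^sub>M N" and c: "c \<in> space N"
  shows "(\<lambda>u. case u of None \<Rightarrow> c | Some x \<Rightarrow> f x) \<in> optM M \<rightarrow>\<^sub>M N"
proof (rule measurableI)
  fix u assume "u \<in> space (optM M)"
  then show "(case u of None \<Rightarrow> c | Some x \<Rightarrow> f x) \<in> space N"
    using c measurable_space[OF f] by (auto simp: space_optM)
next
  fix A assume A: "A \<in> sets N"
  have eq: "(\<lambda>u. case u of None \<Rightarrow> c | Some x \<Rightarrow> f x) -` A \<inter> space (optM M)
      = (if c \<in> A then {None} else {}) \<union> Some ` (f -` A \<inter> space M)"
    by (auto simp: space_optM split: option.splits)
  have S: "Some ` (f -` A \<inter> space M) \<in> sets (optM M)"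
    using measurable_sets[OF f A] by (rule Some_image_in_sets_optM)
  show "(\<lambda>u. case u of None \<Rightarrow> c | Some x \<Rightarrow> f x) -` A \<inter> space (optM M) \<in> sets (optM M)"
    unfolding eq using sets.Un[OF None_in_sets_optM S] S by (simp del: Un_insert_left)
qed

lemma measurable_Some_optM: "Some \<in> M \<rightarrow>\<^sub>M optM M"
proof (rule measurableI)
  fix A assume "A \<in> sets (optM M)"
  then show "Some -` A \<inter> space M \<in> sets M"
    unfolding sets_optM
  proof induction
    case (Basic a)
    then consider "a = {None}" | B where "B \<in> sets M" "a = Some ` B" by blast
    then show ?case
    proof cases
      case 1
      then have "Some -` a \<inter> space M = {}" by auto
      then show ?thesis by simp
    next
      case 2
      then have "Some -` a \<inter> space M = B" using sets.sets_into_space[OF 2(1)] by auto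
      then show ?thesis using 2 by simp
    qed
  next
    case (Compl a)
    have "Some -` (insert None (Some ` space M) - a) \<inter> space M = space M - (Some -` a \<inter> space M)"
      by auto
    then show ?case using Compl by auto
  next
    case (Union a)
    have "Some -` (\<Union>i. a i) \<inter> space M = (\<Union>i. Some -` a i \<inter> space M)" by auto
    moreover have "(\<Union>i. Some -` a i \<inter> space M) \<in> sets M"
      using Union by (intro sets.countable_UN) auto
    ultimately show ?case by (simp only:)
  qed simp
qed (simp add: space_optM)

lemma measurable_the_optM: "the \<in> optM (restrict_space borel S) \<rightarrow>\<^sub>M borel"
proof -
  have "(\<lambda>u. case u of None \<Rightarrow> the None | Some x \<Rightarrow> x) \<in> optM (restrict_space borel S) \<rightarrow>\<^sub>M borel"
    by (rule measurable_case_option_optM) (auto intro: measurable_restrict_space1)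
  moreover have "(\<lambda>u. case u of None \<Rightarrow> the None | Some x \<Rightarrow> x) = the"
    by (auto simp: fun_eq_iff split: option.splits)
  ultimately show ?thesis by metis
qed

definition impulse_case :: "('x \<times> 'a \<Rightarrow> 'b) \<Rightarrow> 'b \<Rightarrow> 'x option \<times> 'a option \<Rightarrow> 'b" where
  "impulse_case F c p = (if fst p \<noteq> None \<and> snd p \<noteq> None then F (the (fst p), the (snd p)) else c)"

lemma impulse_case_simps [simp]:
  "impulse_case F c (Some x, Some a) = F (x, a)"
  "impulse_case F c (None, a') = c"
  "impulse_case F c (x', None) = c"
  by (auto simp: impulse_case_def)

lemma measurable_impulse_case:
  fixes Xs :: "'x::second_countable_topology set" and Ai :: "'a::second_countable_topology set"
  assumes F: "F \<in> (borel :: ('x \<times> 'a) measure) \<rightarrow>\<^sub>M N" and c: "c \<in> space N"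
  shows "impulse_case F c \<in> optM (restrict_space borel Xs) \<Otimes>\<^sub>M optM (restrict_space borel Ai) \<rightarrow>\<^sub>M N"
  unfolding impulse_case_def
proof (rule measurable_If)
  let ?S = "optM (restrict_space borel Xs) \<Otimes>\<^sub>M optM (restrict_space borel Ai)"
  have "F \<in> borel \<Otimes>\<^sub>M borel \<rightarrow>\<^sub>M N" using F by (simp add: borel_prod)
  then show "(\<lambda>p. F (the (fst p), the (snd p))) \<in> ?S \<rightarrow>\<^sub>M N"
    by (rule measurable_compose[rotated], intro measurable_Pair)
       (rule measurable_compose[OF measurable_fst measurable_the_optM],
        rule measurable_compose[OF measurable_snd measurable_the_optM])
  have "{p \<in> space ?S. fst p \<noteq> None \<and> snd p \<noteq> None}
      = (space (optM (restrict_space borel Xs)) - {None}) \<times> (space (optM (restrict_space borel Ai)) - {None})"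
    by (auto simp: space_pair_measure)
  then show "{p \<in> space ?S. fst p \<noteq> None \<and> snd p \<noteq> None} \<in> sets ?S"
    by (metis pair_measureI sets.Diff sets.top None_in_sets_optM)
qed (use c in simp)

lemma measurable_traj_component:
  "(\<lambda>\<omega>. \<omega> n) \<in> trajM Xs Ai \<rightarrow>\<^sub>M optM (XM Xs) \<Otimes>\<^sub>M optM (restrict_space borel Ai)"
  unfolding trajM_def by (rule measurable_component_singleton) simp

lemma kernel_on_sets: "kernel_on Xs K k \<Longrightarrow> (x, a) \<in> K \<Longrightarrow> sets (k x a) = sets (XM Xs)"
  unfolding kernel_on_def by auto

lemma kernel_on_space: "kernel_on Xs K k \<Longrightarrow> (x, a) \<in> K \<Longrightarrow> space (k x a) = Xs"
  using sets_eq_imp_space_eq[OF kernel_on_sets] by (simp add: XM_def space_restrict_space)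

lemma measurable_Some_kernel: "kernel_on Xs K k \<Longrightarrow> (x, a) \<in> K \<Longrightarrow> Some \<in> k x a \<rightarrow>\<^sub>M optM (XM Xs)"
  using measurable_Some_optM measurable_cong_sets[OF kernel_on_sets refl] by blast

section \<open>Conditional distributions under a strategic measure\<close>

lemma finite_measure_eq_on_rectangles:
  assumes "finite_measure \<mu>" and sets_\<mu>: "sets \<mu> = sets (M \<Otimes>\<^sub>M N)" and sets_\<nu>: "sets \<nu> = sets (M \<Otimes>\<^sub>M N)"
    and rect: "\<And>A B. A \<in> sets M \<Longrightarrow> B \<in> sets N \<Longrightarrow> emeasure \<mu> (A \<times> B) = emeasure \<nu> (A \<times> B)"
  shows "\<mu> = \<nu>"
proof (rule measure_eqI_generator_eq[OF Int_stable_pair_measure_generator pair_measure_closed,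
      where A="\<lambda>_. space M \<times> space N"])
  show "sets \<mu> = sigma_sets (space M \<times> space N) {A \<times> B |A B. A \<in> sets M \<and> B \<in> sets N}"
    and "sets \<nu> = sigma_sets (space M \<times> space N) {A \<times> B |A B. A \<in> sets M \<and> B \<in> sets N}"
    by (simp_all add: sets_\<mu> sets_\<nu> sets_pair_measure)
  show "range (\<lambda>_. space M \<times> space N) \<subseteq> {A \<times> B |A B. A \<in> sets M \<and> B \<in> sets N}"
    by blast
  show "emeasure \<mu> (space M \<times> space N) \<noteq> \<infinity>"
    using finite_measure.emeasure_finite[OF assms(1)] by simp
qed (auto simp: rect)

lemma prob_space_imp_trans:
  assumes Q: "kernel_on Xs Ki Q" and Q_prob: "\<forall>(x, a)\<in>Ki. prob_space (Q x a)"
  shows "prob_space (imp_trans Xs Ki Q p)"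
  using Q_prob measurable_Some_kernel[OF Q]
  by (auto simp: imp_trans_def space_optM split: option.splits prod.splits
      intro!: prob_space.prob_space_distr prob_space_return)

lemma emeasure_imp_trans:
  assumes Q: "kernel_on Xs Ki Q" and B: "B \<in> sets (optM (XM Xs))"
  shows "emeasure (imp_trans Xs Ki Q p) B
    = impulse_case (\<lambda>q. if q \<in> Ki then emeasure (Q (fst q) (snd q)) (Some -` B \<inter> Xs) else indicator B None)
        (indicator B None) p"
proof -
  obtain o1 o2 where p: "p = (o1, o2)" by fastforce
  show ?thesis
  proof (cases "\<exists>x a. o1 = Some x \<and> o2 = Some a \<and> (x, a) \<in> Ki")
    case True
    then obtain x a where xa: "o1 = Some x" "o2 = Some a" "(x, a) \<in> Ki" by blast
    then show ?thesis
      using B by (simp add: p imp_trans_def emeasure_distr[OF measurable_Some_kernel[OF Q xa(3)] B]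
          kernel_on_space[OF Q xa(3)] Int_commute)
  next
    case False
    then have "imp_trans Xs Ki Q p = return (optM (XM Xs)) None"
      by (auto simp: p imp_trans_def split: option.splits)
    moreover have "impulse_case (\<lambda>q. if q \<in> Ki then emeasure (Q (fst q) (snd q)) (Some -` B \<inter> Xs)
        else indicator B None) (indicator B None) p = indicator B None"
      using False by (cases o1; cases o2) (auto simp: p)
    ultimately show ?thesis using B by simp
  qed
qed

lemma measurable_imp_trans:
  fixes Xs :: "'x::second_countable_topology set" and Ai :: "'a::second_countable_topology set"
  assumes Ki: "Ki \<in> sets borel" and Q: "kernel_on Xs Ki Q" and Q_prob: "\<forall>(x, a)\<in>Ki. prob_space (Q x a)"
  shows "imp_trans Xs Ki Q \<in> optM (XM Xs) \<Otimes>\<^sub>M optM (restrict_space borel Ai) \<rightarrow>\<^sub>M subprob_algebra (optM (XM Xs))"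
proof (rule measurable_subprob_algebra)
  show "subprob_space (imp_trans Xs Ki Q p)" for p
    by (rule prob_space_imp_subprob_space[OF prob_space_imp_trans[OF Q Q_prob]])
  show "sets (imp_trans Xs Ki Q p) = sets (optM (XM Xs))" for p
    by (auto simp: imp_trans_def split: option.splits prod.splits)
next
  fix B assume B: "B \<in> sets (optM (XM Xs))"
  have "Some -` B \<inter> Xs \<in> sets (XM Xs)"
    using measurable_sets[OF measurable_Some_optM B] by (simp add: XM_def space_restrict_space)
  then have "(\<lambda>q. emeasure (Q (fst q) (snd q)) (Some -` B \<inter> Xs)) \<in> borel_measurable (restrict_space borel Ki)"
    using Q unfolding kernel_on_def by blast
  then have "(\<lambda>q. if q \<in> Ki then emeasure (Q (fst q) (snd q)) (Some -` B \<inter> Xs) else indicator B None)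
      \<in> borel \<rightarrow>\<^sub>M (borel :: ennreal measure)"
    using Ki by (simp add: measurable_restrict_space_iff)
  then show "(\<lambda>p. emeasure (imp_trans Xs Ki Q p) B) \<in> borel_measurable (optM (XM Xs) \<Otimes>\<^sub>M optM (restrict_space borel Ai))"
    unfolding emeasure_imp_trans[OF Q B] XM_def by (rule measurable_impulse_case) simp
qed

lemma (in finite_measure) nn_integral_eq_of_integral_eq:
  fixes f g :: "'a \<Rightarrow> real"
  assumes f: "f \<in> borel_measurable M" and g: "g \<in> borel_measurable M"
    and f_bounds: "\<And>x. x \<in> space M \<Longrightarrow> 0 \<le> f x \<and> f x \<le> c"
    and g_bounds: "\<And>x. x \<in> space M \<Longrightarrow> 0 \<le> g x \<and> g x \<le> c"
    and eq: "(\<integral>x. f x \<partial>M) = (\<integral>x. g x \<partial>M)"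
  shows "(\<integral>\<^sup>+x. ennreal (f x) \<partial>M) = (\<integral>\<^sup>+x. ennreal (g x) \<partial>M)"
proof -
  have "integrable M f" "integrable M g"
    using f g f_bounds g_bounds by (auto intro!: integrable_const_bound[where B=c] AE_I2)
  then show ?thesis
    using eq f_bounds g_bounds by (simp add: nn_integral_eq_integral AE_I2)
qed

lemma (in prob_space) limsup_nn_integral_le:
  fixes u :: "nat \<Rightarrow> 'a \<Rightarrow> ennreal"
  assumes u: "\<And>n. u n \<in> borel_measurable M"
    and bound: "AE x in M. \<forall>n. u n x \<le> limsup (\<lambda>n. u n x) + ennreal c"
  shows "limsup (\<lambda>n. \<integral>\<^sup>+x. u n x \<partial>M) \<le> (\<integral>\<^sup>+x. limsup (\<lambda>n. u n x) \<partial>M)"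
proof -
  have limsup: "(\<lambda>x. limsup (\<lambda>n. u n x)) \<in> borel_measurable M"
    using u by (rule borel_measurable_limsup)
  show ?thesis
  proof (cases "(\<integral>\<^sup>+x. limsup (\<lambda>n. u n x) + ennreal c \<partial>M) = \<infinity>")
    case True
    then show ?thesis
      using limsup by (simp add: nn_integral_add emeasure_space_1)
  next
    case False
    show ?thesis
    proof (rule nn_integral_limsup[where w="\<lambda>x. limsup (\<lambda>n. u n x) + ennreal c"])
      show "AE x in M. u n x \<le> limsup (\<lambda>n. u n x) + ennreal c" for n
        using bound by eventually_elim blast
    qed (use False limsup u in \<open>auto simp: less_top\<close>)
  qed
qed

locale strategic_measure =
  fixes Xs :: "'x::second_countable_topology set" and Ai :: "'a::second_countable_topology set" and Aix :: "'x \<Rightarrow> 'a set"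
    and Q :: "'x \<Rightarrow> 'a \<Rightarrow> 'x measure" and b :: "nat \<Rightarrow> ('x, 'a) traj \<Rightarrow> 'a option measure"
    and z :: 'x and P :: "('x, 'a) traj measure"
  assumes policy: "is_policy Xs Ai Aix b"
    and strategic: "is_strategic Xs Ai (Kset Xs Aix) Q b z P"
    and Ki_borel: "Kset Xs Aix \<in> sets borel"
begin

abbreviation "Ki \<equiv> Kset Xs Aix"
abbreviation "states \<equiv> optM (XM Xs)"
abbreviation "actions \<equiv> optM (restrict_space borel Ai)"

sublocale prob_space P
  using strategic by (simp add: is_strategic_def)

lemma sets_P: "sets P = sets (trajM Xs Ai)"
  using strategic by (simp add: is_strategic_def)

lemma space_P: "space P = space (trajM Xs Ai)"
  using sets_P by (rule sets_eq_imp_space_eq)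

lemma measurable_P_iff: "f \<in> P \<rightarrow>\<^sub>M N \<longleftrightarrow> f \<in> trajM Xs Ai \<rightarrow>\<^sub>M N"
  by (simp add: measurable_cong_sets[OF sets_P refl])

lemma measurable_step: "(\<lambda>\<omega>. \<omega> n) \<in> P \<rightarrow>\<^sub>M states \<Otimes>\<^sub>M actions"
  using measurable_traj_component by (simp add: measurable_P_iff)

lemma measurable_state: "(\<lambda>\<omega>. fst (\<omega> n)) \<in> P \<rightarrow>\<^sub>M states"
  using measurable_compose[OF measurable_step measurable_fst] by simp

lemma measurable_action: "(\<lambda>\<omega>. snd (\<omega> n)) \<in> P \<rightarrow>\<^sub>M actions"
  using measurable_compose[OF measurable_step measurable_snd] by simp

lemma measurable_policy_prob_algebra: "b n \<in> P \<rightarrow>\<^sub>M prob_algebra actions"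
  using policy by (simp add: is_policy_def measurable_P_iff)

lemma policy_in_prob_algebra: "\<omega> \<in> space P \<Longrightarrow> b n \<omega> \<in> space (prob_algebra actions)"
  by (rule measurable_space[OF measurable_policy_prob_algebra])

lemma pred_active: "Measurable.pred P (\<lambda>\<omega>. snd (\<omega> n) \<noteq> None)"
proof (rule pred_intros_logic(2))
  show "Measurable.pred P (\<lambda>\<omega>. snd (\<omega> n) = None)"
    using pred_sets2[OF None_in_sets_optM measurable_action[of n]] by simp
qed

lemma prob_space_policy: "\<omega> \<in> space P \<Longrightarrow> prob_space (b n \<omega>)"
  using policy_in_prob_algebra by (simp add: space_prob_algebra)

lemma measurable_policy: "b n \<in> P \<rightarrow>\<^sub>M subprob_algebra actions"
  by (rule measurable_prob_algebraD[OF measurable_policy_prob_algebra])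

lemma nn_integral_policy:
  assumes g: "g \<in> borel_measurable P" and g_bounds: "\<And>\<omega>. 0 \<le> g \<omega> \<and> g \<omega> \<le> 1"
    and g_history: "\<And>\<omega> \<omega>'. hist_eq n \<omega> \<omega>' \<Longrightarrow> g \<omega> = g \<omega>'" and D: "D \<in> sets actions"
  shows "(\<integral>\<^sup>+\<omega>. ennreal (g \<omega>) * indicator D (snd (\<omega> n)) \<partial>P)
       = (\<integral>\<^sup>+\<omega>. ennreal (g \<omega>) * emeasure (b n \<omega>) D \<partial>P)"
proof -
  have "bounded (range g)"
    using g_bounds by (auto simp: bounded_iff intro!: exI[of _ 1])
  then have eq: "(\<integral>\<omega>. g \<omega> * indicator D (snd (\<omega> n)) \<partial>P) = (\<integral>\<omega>. g \<omega> * measure (b n \<omega>) D \<partial>P)"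
    using strategic g g_history D by (simp add: is_strategic_def measurable_P_iff)
  have "(\<integral>\<^sup>+\<omega>. ennreal (g \<omega>) * indicator D (snd (\<omega> n)) \<partial>P)
      = (\<integral>\<^sup>+\<omega>. ennreal (g \<omega> * indicator D (snd (\<omega> n))) \<partial>P)"
    by (intro nn_integral_cong) (simp add: indicator_def)
  also have "\<dots> = (\<integral>\<^sup>+\<omega>. ennreal (g \<omega> * measure (b n \<omega>) D) \<partial>P)"
    using eq g_bounds prob_space.prob_le_1[OF prob_space_policy]
    by (intro nn_integral_eq_of_integral_eq[where c=1] borel_measurable_times g
        measurable_compose[OF measurable_action borel_measurable_indicator[OF D]]
        measurable_compose[OF measurable_policy measurable_measure_subprob_algebra[OF D]])
      (auto simp: indicator_def mult_le_one)
  also have "\<dots> = (\<integral>\<^sup>+\<omega>. ennreal (g \<omega>) * emeasure (b n \<omega>) D \<partial>P)"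
    using g_bounds prob_space_policy
    by (intro nn_integral_cong) (simp add: ennreal_mult finite_measure.emeasure_eq_measure[OF prob_space.finite_measure])
  finally show ?thesis .
qed

lemma sets_policy: "\<omega> \<in> space P \<Longrightarrow> sets (b n \<omega>) = sets actions"
  using policy_in_prob_algebra by (simp add: space_prob_algebra)

lemma measurable_pair_state:
  "\<omega> \<in> space P \<Longrightarrow> (\<lambda>a. (fst (\<omega> n), a)) \<in> b n \<omega> \<rightarrow>\<^sub>M states \<Otimes>\<^sub>M actions"
  using measurable_space[OF measurable_state] measurable_cong_sets[OF sets_policy refl]
  by (auto intro!: measurable_Pair measurable_ident_sets[OF sets_policy])

lemma measurable_step_kernel:
  "(\<lambda>\<omega>. distr (b n \<omega>) (states \<Otimes>\<^sub>M actions) (\<lambda>a. (fst (\<omega> n), a)))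
     \<in> P \<rightarrow>\<^sub>M subprob_algebra (states \<Otimes>\<^sub>M actions)"
proof (rule measurable_distr2[OF _ measurable_policy])
  show "(\<lambda>(\<omega>, a). (fst (\<omega> n), a)) \<in> P \<Otimes>\<^sub>M actions \<rightarrow>\<^sub>M states \<Otimes>\<^sub>M actions"
    using measurable_fst''[OF measurable_state] by (auto simp: case_prod_beta' intro!: measurable_Pair)
qed

lemma distr_step_eq_bind:
  "distr P (states \<Otimes>\<^sub>M actions) (\<lambda>\<omega>. \<omega> n)
     = P \<bind> (\<lambda>\<omega>. distr (b n \<omega>) (states \<Otimes>\<^sub>M actions) (\<lambda>a. (fst (\<omega> n), a)))"
  (is "?\<mu> = P \<bind> ?K")
proof -
  note K = measurable_step_kernel[of n]
  show ?thesis
  proof (rule finite_measure_eq_on_rectangles)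
    show "finite_measure ?\<mu>"
      by (rule prob_space.finite_measure[OF prob_space_distr[OF measurable_step]])
    show "sets (P \<bind> ?K) = sets (states \<Otimes>\<^sub>M actions)"
      by (rule sets_bind_measurable[OF K not_empty])
  next
    fix C D assume C: "C \<in> sets states" and D: "D \<in> sets actions"
    have CD: "C \<times> D \<in> sets (states \<Otimes>\<^sub>M actions)" using C D by (rule pair_measureI)
    have g: "(\<lambda>\<omega>. indicator C (fst (\<omega> n)) :: real) \<in> borel_measurable P"
      using measurable_compose[OF measurable_state borel_measurable_indicator[OF C]] .
    have "emeasure ?\<mu> (C \<times> D) = (\<integral>\<^sup>+p. indicator (C \<times> D) p \<partial>?\<mu>)"
      using CD by (subst nn_integral_indicator) auto
    also have "\<dots> = (\<integral>\<^sup>+\<omega>. indicator (C \<times> D) (\<omega> n) \<partial>P)"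
      by (rule nn_integral_distr[OF measurable_step]) (use CD in simp)
    also have "\<dots> = (\<integral>\<^sup>+\<omega>. ennreal (indicator C (fst (\<omega> n))) * indicator D (snd (\<omega> n)) \<partial>P)"
      by (intro nn_integral_cong) (auto simp: indicator_def mem_Times_iff)
    also have "\<dots> = (\<integral>\<^sup>+\<omega>. ennreal (indicator C (fst (\<omega> n))) * emeasure (b n \<omega>) D \<partial>P)"
      using D g by (intro nn_integral_policy) (auto simp: hist_eq_def indicator_def)
    also have "\<dots> = (\<integral>\<^sup>+\<omega>. emeasure (?K \<omega>) (C \<times> D) \<partial>P)"
    proof (intro nn_integral_cong)
      fix \<omega> assume \<omega>: "\<omega> \<in> space P"
      have "(\<lambda>a. (fst (\<omega> n), a)) -` (C \<times> D) \<inter> space (b n \<omega>) = (if fst (\<omega> n) \<in> C then D else {})"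
        using sets.sets_into_space[OF D] sets_eq_imp_space_eq[OF sets_policy[OF \<omega>]] by auto
      then show "ennreal (indicator C (fst (\<omega> n))) * emeasure (b n \<omega>) D = emeasure (?K \<omega>) (C \<times> D)"
        by (simp add: emeasure_distr[OF measurable_pair_state[OF \<omega>] CD])
    qed
    also have "\<dots> = emeasure (P \<bind> ?K) (C \<times> D)"
      by (rule emeasure_bind[OF not_empty K CD, symmetric])
    finally show "emeasure ?\<mu> (C \<times> D) = emeasure (P \<bind> ?K) (C \<times> D)" .
  qed simp
qed

lemma AE_policy_admissible:
  assumes \<omega>: "\<omega> \<in> space P"
  shows "AE a in b n \<omega>. \<forall>x a'. fst (\<omega> n) = Some x \<longrightarrow> a = Some a' \<longrightarrow> (x, a') \<in> Ki"
proof (cases "fst (\<omega> n)")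
  case (Some x)
  have "x \<in> Xs"
    using measurable_space[OF measurable_state \<omega>, of n] Some by (auto simp: space_optM XM_def space_restrict_space)
  moreover have "AE a in b n \<omega>. a = None \<or> (\<exists>a'. a = Some a' \<and> a' \<in> Aix x)"
    using policy \<omega> Some by (auto simp: is_policy_def space_P)
  ultimately show ?thesis
    by (auto simp: Some Kset_def elim!: eventually_mono)
qed simp

lemma AE_admissible_impulse: "AE \<omega> in P. \<forall>x a. \<omega> n = (Some x, Some a) \<longrightarrow> (x, a) \<in> Ki"
proof (rule AE_I')
  define S where "S = states \<Otimes>\<^sub>M actions"
  define Bad where "Bad = {p \<in> space S. impulse_case (\<lambda>q. q \<notin> Ki) False p}"
  have "(\<lambda>q. q \<notin> Ki) \<in> borel \<rightarrow>\<^sub>M count_space UNIV"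
    using Ki_borel by (simp add: pred_def)
  then have "impulse_case (\<lambda>q. q \<notin> Ki) False \<in> S \<rightarrow>\<^sub>M count_space UNIV"
    unfolding S_def XM_def by (rule measurable_impulse_case) simp
  from measurable_sets[OF this, of "{True}"] have Bad: "Bad \<in> sets S"
    by (simp add: Bad_def vimage_def Int_def conj_commute)
  have no_bad_action: "emeasure (distr (b n \<omega>) S (\<lambda>a. (fst (\<omega> n), a))) Bad = 0" if \<omega>: "\<omega> \<in> space P" for \<omega>
  proof -
    have "AE a in b n \<omega>. \<not> (fst (\<omega> n), a) \<in> Bad"
      using AE_policy_admissible[OF \<omega>] by (rule eventually_mono) (auto simp: Bad_def impulse_case_def)
    then have "emeasure (b n \<omega>) {a \<in> space (b n \<omega>). (fst (\<omega> n), a) \<in> Bad} = 0"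
      by (rule emeasure_eq_0_AE)
    then show ?thesis
      by (simp add: emeasure_distr[OF measurable_pair_state[OF \<omega>, folded S_def] Bad] vimage_def Int_def conj_commute)
  qed
  have "emeasure P ((\<lambda>\<omega>. \<omega> n) -` Bad \<inter> space P) = emeasure (distr P S (\<lambda>\<omega>. \<omega> n)) Bad"
    by (rule emeasure_distr[symmetric, OF measurable_step[folded S_def] Bad])
  also have "\<dots> = (\<integral>\<^sup>+\<omega>. emeasure (distr (b n \<omega>) S (\<lambda>a. (fst (\<omega> n), a))) Bad \<partial>P)"
    unfolding S_def distr_step_eq_bind using Bad[unfolded S_def] by (rule emeasure_bind[OF not_empty measurable_step_kernel])
  also have "\<dots> = (\<integral>\<^sup>+\<omega>. 0 \<partial>P)"
    by (rule nn_integral_cong) (rule no_bad_action)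
  finally show "(\<lambda>\<omega>. \<omega> n) -` Bad \<inter> space P \<in> null_sets P"
    using measurable_sets[OF measurable_step[folded S_def] Bad] by (simp add: null_setsI)
  show "{\<omega> \<in> space P. \<not> (\<forall>x a. \<omega> n = (Some x, Some a) \<longrightarrow> (x, a) \<in> Ki)}
      \<subseteq> (\<lambda>\<omega>. \<omega> n) -` Bad \<inter> space P"
  proof (intro subsetI)
    fix \<omega> assume "\<omega> \<in> {\<omega> \<in> space P. \<not> (\<forall>x a. \<omega> n = (Some x, Some a) \<longrightarrow> (x, a) \<in> Ki)}"
    then obtain x a where \<omega>: "\<omega> \<in> space P" "\<omega> n = (Some x, Some a)" "(x, a) \<notin> Ki"
      by blast
    have "\<omega> n \<in> space S"
      using measurable_space[OF measurable_step \<omega>(1)] by (simp add: S_def)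
    then show "\<omega> \<in> (\<lambda>\<omega>. \<omega> n) -` Bad \<inter> space P"
      using \<omega> by (simp add: Bad_def)
  qed
qed

end

locale strategic_measure_kernel = strategic_measure +
  assumes Q_kernel: "kernel_on Xs (Kset Xs Aix) Q"
    and Q_prob: "\<forall>(x, a)\<in>Kset Xs Aix. prob_space (Q x a)"
begin

abbreviation "transition n \<omega> \<equiv> imp_trans Xs Ki Q (\<omega> n)"

lemma measurable_transition:
  "(\<lambda>\<omega>. transition n \<omega>) \<in> P \<rightarrow>\<^sub>M subprob_algebra states"
  using measurable_compose[OF measurable_step measurable_imp_trans[OF Ki_borel Q_kernel Q_prob]] .

lemma subprob_space_transition: "\<omega> \<in> space P \<Longrightarrow> subprob_space (transition n \<omega>)"
  using measurable_space[OF measurable_transition] by (simp add: space_subprob_algebra)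

lemma nn_integral_transition:
  assumes h: "h \<in> borel_measurable P" and h_bounds: "\<And>\<omega>. 0 \<le> h \<omega> \<and> h \<omega> \<le> 1"
    and h_history: "\<And>\<omega> \<omega>'. (\<forall>j\<le>n. \<omega> j = \<omega>' j) \<Longrightarrow> h \<omega> = h \<omega>'" and B: "B \<in> sets states"
  shows "(\<integral>\<^sup>+\<omega>. ennreal (h \<omega>) * indicator B (fst (\<omega> (Suc n))) \<partial>P)
       = (\<integral>\<^sup>+\<omega>. ennreal (h \<omega>) * emeasure (transition n \<omega>) B \<partial>P)"
proof -
  have "bounded (range h)"
    using h_bounds by (auto simp: bounded_iff intro!: exI[of _ 1])
  then have eq: "(\<integral>\<omega>. h \<omega> * indicator B (fst (\<omega> (Suc n))) \<partial>P)
      = (\<integral>\<omega>. h \<omega> * measure (transition n \<omega>) B \<partial>P)"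
    using strategic h h_history B by (simp add: is_strategic_def measurable_P_iff)
  have "(\<integral>\<^sup>+\<omega>. ennreal (h \<omega>) * indicator B (fst (\<omega> (Suc n))) \<partial>P)
      = (\<integral>\<^sup>+\<omega>. ennreal (h \<omega> * indicator B (fst (\<omega> (Suc n)))) \<partial>P)"
    by (intro nn_integral_cong) (simp add: indicator_def)
  also have "\<dots> = (\<integral>\<^sup>+\<omega>. ennreal (h \<omega> * measure (transition n \<omega>) B) \<partial>P)"
    using eq h_bounds subprob_space.subprob_measure_le_1[OF subprob_space_transition]
    by (intro nn_integral_eq_of_integral_eq[where c=1] borel_measurable_times h
        measurable_compose[OF measurable_state borel_measurable_indicator[OF B]]
        measurable_compose[OF measurable_transition measurable_measure_subprob_algebra[OF B]])
      (auto simp: indicator_def mult_le_one)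
  also have "\<dots> = (\<integral>\<^sup>+\<omega>. ennreal (h \<omega>) * emeasure (transition n \<omega>) B \<partial>P)"
    using h_bounds subprob_space_transition
    by (intro nn_integral_cong) (simp add: ennreal_mult subprob_space.emeasure_subprob_space_less_top
        finite_measure.emeasure_eq_measure[OF subprob_space.axioms(1)])
  finally show ?thesis .
qed

lemma distr_next_state_density:
  fixes h :: "_ \<Rightarrow> real"
  assumes h: "h \<in> borel_measurable P" and h_bounds: "\<And>\<omega>. 0 \<le> h \<omega> \<and> h \<omega> \<le> 1"
    and h_history: "\<And>\<omega> \<omega>'. (\<forall>j\<le>n. \<omega> j = \<omega>' j) \<Longrightarrow> h \<omega> = h \<omega>'"
  shows "distr (density P (\<lambda>\<omega>. ennreal (h \<omega>))) states (\<lambda>\<omega>. fst (\<omega> (Suc n)))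
       = density P (\<lambda>\<omega>. ennreal (h \<omega>)) \<bind> (\<lambda>\<omega>. transition n \<omega>)"
proof (rule measure_eqI)
  have T: "(\<lambda>\<omega>. transition n \<omega>) \<in> density P (\<lambda>\<omega>. ennreal (h \<omega>)) \<rightarrow>\<^sub>M subprob_algebra states"
    using measurable_transition by simp
  show "sets (distr (density P (\<lambda>\<omega>. ennreal (h \<omega>))) states (\<lambda>\<omega>. fst (\<omega> (Suc n))))
      = sets (density P (\<lambda>\<omega>. ennreal (h \<omega>)) \<bind> (\<lambda>\<omega>. transition n \<omega>))"
    using sets_bind_measurable[OF T] not_empty by simp
  fix B assume "B \<in> sets (distr (density P (\<lambda>\<omega>. ennreal (h \<omega>))) states (\<lambda>\<omega>. fst (\<omega> (Suc n))))"
  then have B: "B \<in> sets states" by simp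
  have "emeasure (distr (density P (\<lambda>\<omega>. ennreal (h \<omega>))) states (\<lambda>\<omega>. fst (\<omega> (Suc n)))) B
      = (\<integral>\<^sup>+u. indicator B u \<partial>distr (density P (\<lambda>\<omega>. ennreal (h \<omega>))) states (\<lambda>\<omega>. fst (\<omega> (Suc n))))"
    using B by (subst nn_integral_indicator) auto
  also have "\<dots> = (\<integral>\<^sup>+\<omega>. indicator B (fst (\<omega> (Suc n))) \<partial>density P (\<lambda>\<omega>. ennreal (h \<omega>)))"
    by (rule nn_integral_distr) (use B measurable_state in auto)
  also have "\<dots> = (\<integral>\<^sup>+\<omega>. ennreal (h \<omega>) * indicator B (fst (\<omega> (Suc n))) \<partial>P)"
    using B h by (intro nn_integral_density) (auto intro: measurable_compose[OF measurable_state])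
  also have "\<dots> = (\<integral>\<^sup>+\<omega>. ennreal (h \<omega>) * emeasure (transition n \<omega>) B \<partial>P)"
    by (rule nn_integral_transition[OF h h_bounds h_history B])
  also have "\<dots> = emeasure (density P (\<lambda>\<omega>. ennreal (h \<omega>)) \<bind> (\<lambda>\<omega>. transition n \<omega>)) B"
    using B h T not_empty
    by (simp add: emeasure_bind nn_integral_density measurable_compose[OF measurable_transition
          measurable_emeasure_subprob_algebra])
  finally show "emeasure (distr (density P (\<lambda>\<omega>. ennreal (h \<omega>))) states (\<lambda>\<omega>. fst (\<omega> (Suc n)))) B
      = emeasure (density P (\<lambda>\<omega>. ennreal (h \<omega>)) \<bind> (\<lambda>\<omega>. transition n \<omega>)) B" .
qed

lemma nn_integral_next_state:
  fixes h :: "_ \<Rightarrow> real"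
  assumes h: "h \<in> borel_measurable P" and h_bounds: "\<And>\<omega>. 0 \<le> h \<omega> \<and> h \<omega> \<le> 1"
    and h_history: "\<And>\<omega> \<omega>'. (\<forall>j\<le>n. \<omega> j = \<omega>' j) \<Longrightarrow> h \<omega> = h \<omega>'"
    and f: "f \<in> borel_measurable states"
  shows "(\<integral>\<^sup>+\<omega>. ennreal (h \<omega>) * f (fst (\<omega> (Suc n))) \<partial>P)
       = (\<integral>\<^sup>+\<omega>. ennreal (h \<omega>) * (\<integral>\<^sup>+u. f u \<partial>transition n \<omega>) \<partial>P)"
proof -
  have T: "(\<lambda>\<omega>. transition n \<omega>) \<in> density P (\<lambda>\<omega>. ennreal (h \<omega>)) \<rightarrow>\<^sub>M subprob_algebra states"
    using measurable_transition by simp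
  have "(\<integral>\<^sup>+\<omega>. ennreal (h \<omega>) * f (fst (\<omega> (Suc n))) \<partial>P)
      = (\<integral>\<^sup>+\<omega>. f (fst (\<omega> (Suc n))) \<partial>density P (\<lambda>\<omega>. ennreal (h \<omega>)))"
    using h f measurable_state by (simp add: nn_integral_density)
  also have "\<dots> = (\<integral>\<^sup>+u. f u \<partial>distr (density P (\<lambda>\<omega>. ennreal (h \<omega>))) states (\<lambda>\<omega>. fst (\<omega> (Suc n))))"
    using f measurable_state by (simp add: nn_integral_distr)
  also have "\<dots> = (\<integral>\<^sup>+\<omega>. (\<integral>\<^sup>+u. f u \<partial>transition n \<omega>) \<partial>density P (\<lambda>\<omega>. ennreal (h \<omega>)))"
    by (simp add: distr_next_state_density[OF h h_bounds h_history] nn_integral_bind[OF f T])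
  also have "\<dots> = (\<integral>\<^sup>+\<omega>. ennreal (h \<omega>) * (\<integral>\<^sup>+u. f u \<partial>transition n \<omega>) \<partial>P)"
    using h f by (simp add: nn_integral_density measurable_compose[OF measurable_transition
          nn_integral_measurable_subprob_algebra])
  finally show ?thesis .
qed

end

section \<open>The running value of an intervention\<close>

definition opt_value :: "('x \<Rightarrow> real) \<Rightarrow> 'x option \<Rightarrow> ennreal" where
  "opt_value U u = (case u of None \<Rightarrow> 0 | Some x \<Rightarrow> ennreal (U x))"

definition stop_value :: "('x \<Rightarrow> real) \<Rightarrow> 'x option \<times> 'a option \<Rightarrow> ennreal" where
  "stop_value U p = (if snd p = None then opt_value U (fst p) else 0)"

definition continue_value :: "('x \<Rightarrow> real) \<Rightarrow> 'x option \<times> 'a option \<Rightarrow> ennreal" where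
  "continue_value U p = (if snd p \<noteq> None then opt_value U (fst p) else 0)"

definition impulse_cost :: "('x \<times> 'a) set \<Rightarrow> ('x \<Rightarrow> 'a \<Rightarrow> real) \<Rightarrow> 'x option \<times> 'a option \<Rightarrow> ennreal" where
  "impulse_cost Ki ci = impulse_case (\<lambda>q. if q \<in> Ki then ennreal (ci (fst q) (snd q)) else 0) 0"

text \<open>The costs of the impulses before step n, plus U at the state where the trajectory stopped
  or, if it has not stopped yet, at its current state.\<close>

definition running_value ::
  "('x \<Rightarrow> real) \<Rightarrow> ('x \<times> 'a) set \<Rightarrow> ('x \<Rightarrow> 'a \<Rightarrow> real) \<Rightarrow> nat \<Rightarrow> ('x, 'a) traj \<Rightarrow> ennreal" where
  "running_value U Ki ci n \<omega> =
     (\<Sum>j<n. impulse_cost Ki ci (\<omega> j) + stop_value U (\<omega> j)) + opt_value U (fst (\<omega> n))"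

lemma opt_value_simps [simp]: "opt_value U None = 0" "opt_value U (Some x) = ennreal (U x)"
  by (simp_all add: opt_value_def)

lemma opt_value_split: "opt_value U (fst p) = stop_value U p + continue_value U p"
  by (simp add: stop_value_def continue_value_def)

lemma running_value_Suc:
  "running_value U Ki ci (Suc n) \<omega> + continue_value U (\<omega> n)
     = running_value U Ki ci n \<omega> + impulse_cost Ki ci (\<omega> n) + opt_value U (fst (\<omega> (Suc n)))"
  by (simp add: running_value_def opt_value_split[of U "\<omega> n"] ac_simps)

lemma measurable_opt_value: "U \<in> borel_measurable M \<Longrightarrow> opt_value U \<in> borel_measurable (optM M)"
  unfolding opt_value_def by (rule measurable_case_option_optM) auto

lemma measurable_stop_value:
  assumes "U \<in> borel_measurable M"
  shows "stop_value U \<in> borel_measurable (optM M \<Otimes>\<^sub>M optM N)"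
proof -
  have "{p \<in> space (optM M \<Otimes>\<^sub>M optM N). snd p = None} = space (optM M) \<times> {None}"
    by (auto simp: space_pair_measure space_optM)
  then show ?thesis
    unfolding stop_value_def
    by (intro measurable_If measurable_compose[OF measurable_fst measurable_opt_value[OF assms]])
      (auto intro: pair_measureI None_in_sets_optM)
qed

lemma measurable_continue_value:
  assumes "U \<in> borel_measurable M"
  shows "continue_value U \<in> borel_measurable (optM M \<Otimes>\<^sub>M optM N)"
proof -
  have "{p \<in> space (optM M \<Otimes>\<^sub>M optM N). snd p \<noteq> None} = space (optM M) \<times> (space (optM N) - {None})"
    by (auto simp: space_pair_measure)
  then show ?thesis
    unfolding continue_value_def
    by (intro measurable_If measurable_compose[OF measurable_fst measurable_opt_value[OF assms]])
      (auto intro: pair_measureI None_in_sets_optM)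
qed

lemma measurable_impulse_cost:
  fixes Xs :: "'x::second_countable_topology set" and Ai :: "'a::second_countable_topology set"
  assumes Ki: "Ki \<in> sets borel"
    and ci: "(\<lambda>p. ci (fst p) (snd p)) \<in> borel_measurable (restrict_space borel Ki)"
  shows "impulse_cost Ki ci \<in> borel_measurable (optM (XM Xs) \<Otimes>\<^sub>M optM (restrict_space borel Ai))"
  unfolding impulse_cost_def XM_def
proof (rule measurable_impulse_case)
  show "(\<lambda>q. if q \<in> Ki then ennreal (ci (fst q) (snd q)) else 0) \<in> borel \<rightarrow>\<^sub>M (borel :: ennreal measure)"
    using measurable_compose[OF ci measurable_ennreal] Ki by (simp add: measurable_restrict_space_iff)
qed simp

lemma measurable_running_value:
  fixes Xs :: "'x::second_countable_topology set" and Ai :: "'a::second_countable_topology set"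
  assumes Ki: "Ki \<in> sets borel"
    and ci: "(\<lambda>p. ci (fst p) (snd p)) \<in> borel_measurable (restrict_space borel Ki)"
    and U: "U \<in> borel_measurable (XM Xs)"
  shows "running_value U Ki ci n \<in> borel_measurable (trajM Xs Ai)"
  unfolding running_value_def[abs_def]
  by (intro borel_measurable_add borel_measurable_sum
      measurable_compose[OF measurable_traj_component measurable_impulse_cost[OF Ki ci]]
      measurable_compose[OF measurable_traj_component measurable_stop_value[OF U]]
      measurable_compose[OF measurable_compose[OF measurable_traj_component measurable_fst]
        measurable_opt_value[OF U]])

lemma ystop_eqI: "(\<And>j. j < k \<Longrightarrow> snd (\<omega> j) \<noteq> None) \<Longrightarrow> snd (\<omega> k) = None \<Longrightarrow> ystop \<omega> = k"
  unfolding ystop_def by (rule Least_equality) (assumption, metis leI)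

lemma running_value_stopped:
  assumes active: "\<And>j. j < k \<Longrightarrow> snd (\<omega> j) \<noteq> None" and stop: "snd (\<omega> k) = None"
    and dead: "\<And>j. k < j \<Longrightarrow> \<omega> j = (None, None)"
  shows "running_value U Ki ci n \<omega>
       = (\<Sum>j<min n k. impulse_cost Ki ci (\<omega> j)) + opt_value U (fst (\<omega> (min n k)))"
proof -
  have "(\<Sum>j<n. impulse_cost Ki ci (\<omega> j)) = (\<Sum>j<min n k. impulse_cost Ki ci (\<omega> j))"
  proof (rule sum.mono_neutral_right)
    show "\<forall>j\<in>{..<n} - {..<min n k}. impulse_cost Ki ci (\<omega> j) = 0"
      using stop dead by (auto simp: impulse_cost_def impulse_case_def le_less)
  qed auto
  moreover have "(\<Sum>j<n. stop_value U (\<omega> j)) = (if k < n then opt_value U (fst (\<omega> k)) else 0)"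
  proof -
    have "stop_value U (\<omega> j) = (if j = k then opt_value U (fst (\<omega> k)) else 0)" for j
      using active[of j] stop dead[of j] by (cases j k rule: linorder_cases) (auto simp: stop_value_def)
    then show ?thesis by simp
  qed
  moreover have "opt_value U (fst (\<omega> n)) = 0" if "k < n"
    using dead[OF that] by simp
  ultimately show ?thesis
    by (auto simp: running_value_def sum.distrib min_def)
qed

lemma YsetE:
  assumes "\<omega> \<in> Yset Xs Ai"
  obtains "\<forall>j<ystop \<omega>. \<exists>x a. \<omega> j = (Some x, Some a) \<and> x \<in> Xs \<and> a \<in> Ai"
    and "\<omega> (ystop \<omega>) = (Some (xbar \<omega>), None)" and "xbar \<omega> \<in> Xs"
    and "\<forall>j>ystop \<omega>. \<omega> j = (None, None)"
proof -
  from assms obtain k x where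
    impulses: "\<forall>j<k. \<exists>x a. \<omega> j = (Some x, Some a) \<and> x \<in> Xs \<and> a \<in> Ai"
    and stop: "\<omega> k = (Some x, None)" "x \<in> Xs" and dead: "\<forall>j>k. \<omega> j = (None, None)"
    unfolding Yset_def by blast
  moreover have "ystop \<omega> = k"
    using impulses stop by (intro ystop_eqI) auto
  ultimately show ?thesis
    using that by (simp add: xbar_def)
qed

lemma running_value_Yset_eq:
  assumes Y: "\<omega> \<in> Yset Xs Ai"
    and admissible: "\<forall>j x a. \<omega> j = (Some x, Some a) \<longrightarrow> (x, a) \<in> Ki"
    and ci_nonneg: "\<forall>(x, a)\<in>Ki. 0 \<le> ci x a"
  shows "running_value U Ki ci n \<omega>
      = ennreal (\<Sum>j<min n (ystop \<omega>). ci (the (fst (\<omega> j))) (the (snd (\<omega> j))))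
        + opt_value U (fst (\<omega> (min n (ystop \<omega>))))"
proof -
  obtain impulses: "\<forall>j<ystop \<omega>. \<exists>x a. \<omega> j = (Some x, Some a) \<and> x \<in> Xs \<and> a \<in> Ai"
    and stop: "\<omega> (ystop \<omega>) = (Some (xbar \<omega>), None)" and dead: "\<forall>j>ystop \<omega>. \<omega> j = (None, None)"
    using Y by (rule YsetE)
  have cost: "impulse_cost Ki ci (\<omega> j) = ennreal (ci (the (fst (\<omega> j))) (the (snd (\<omega> j))))"
    and cost_nonneg: "0 \<le> ci (the (fst (\<omega> j))) (the (snd (\<omega> j)))" if j: "j < ystop \<omega>" for j
  proof -
    obtain x a where "\<omega> j = (Some x, Some a)"
      using impulses j by blast
    then show "impulse_cost Ki ci (\<omega> j) = ennreal (ci (the (fst (\<omega> j))) (the (snd (\<omega> j))))"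
      and "0 \<le> ci (the (fst (\<omega> j))) (the (snd (\<omega> j)))"
      using admissible ci_nonneg by (auto simp: impulse_cost_def)
  qed
  have "running_value U Ki ci n \<omega>
      = (\<Sum>j<min n (ystop \<omega>). impulse_cost Ki ci (\<omega> j)) + opt_value U (fst (\<omega> (min n (ystop \<omega>))))"
    using impulses stop dead by (intro running_value_stopped) auto
  also have "(\<Sum>j<min n (ystop \<omega>). impulse_cost Ki ci (\<omega> j))
      = (\<Sum>j<min n (ystop \<omega>). ennreal (ci (the (fst (\<omega> j))) (the (snd (\<omega> j)))))"
    using cost by (intro sum.cong) auto
  also have "\<dots> = ennreal (\<Sum>j<min n (ystop \<omega>). ci (the (fst (\<omega> j))) (the (snd (\<omega> j))))"
    using cost_nonneg by (intro sum_ennreal) auto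
  finally show ?thesis .
qed

lemma running_value_Yset:
  assumes Y: "\<omega> \<in> Yset Xs Ai"
    and admissible: "\<forall>j x a. \<omega> j = (Some x, Some a) \<longrightarrow> (x, a) \<in> Ki"
    and ci_nonneg: "\<forall>(x, a)\<in>Ki. 0 \<le> ci x a"
    and U_bounds: "\<forall>x\<in>Xs. 0 \<le> U x \<and> U x \<le> C"
  shows "0 \<le> U (xbar \<omega>) + Ci ci \<omega>"
    and "eventually (\<lambda>n. running_value U Ki ci n \<omega> = ennreal (U (xbar \<omega>) + Ci ci \<omega>)) sequentially"
    and "running_value U Ki ci n \<omega> \<le> ennreal (U (xbar \<omega>) + Ci ci \<omega>) + ennreal C"
proof -
  define k where "k = ystop \<omega>"
  define c where "c j = ci (the (fst (\<omega> j))) (the (snd (\<omega> j)))" for j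
  obtain impulses: "\<forall>j<k. \<exists>x a. \<omega> j = (Some x, Some a) \<and> x \<in> Xs \<and> a \<in> Ai"
    and stop: "\<omega> k = (Some (xbar \<omega>), None)" "xbar \<omega> \<in> Xs"
    using Y unfolding k_def by (rule YsetE)
  have value_eq: "running_value U Ki ci m \<omega> = ennreal (\<Sum>j<min m k. c j) + opt_value U (fst (\<omega> (min m k)))" for m
    unfolding k_def c_def by (rule running_value_Yset_eq[OF Y admissible ci_nonneg])
  have Ci: "Ci ci \<omega> = (\<Sum>j<k. c j)"
    by (simp add: Ci_def c_def k_def)
  have "0 \<le> c j" if "j < k" for j
    using impulses admissible ci_nonneg that by (fastforce simp: c_def)
  then have c_sum: "0 \<le> (\<Sum>j<m. c j)" "(\<Sum>j<m. c j) \<le> (\<Sum>j<k. c j)" if "m \<le> k" for m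
    using that by (auto intro!: sum_nonneg sum_mono2)
  show "0 \<le> U (xbar \<omega>) + Ci ci \<omega>"
    using U_bounds stop c_sum[of k] by (simp add: Ci)
  show "eventually (\<lambda>n. running_value U Ki ci n \<omega> = ennreal (U (xbar \<omega>) + Ci ci \<omega>)) sequentially"
    unfolding eventually_sequentially
  proof (intro exI allI impI)
    fix m assume "k \<le> m"
    then show "running_value U Ki ci m \<omega> = ennreal (U (xbar \<omega>) + Ci ci \<omega>)"
      using U_bounds stop c_sum[of k] by (simp add: value_eq Ci min_absorb2 add.commute)
  qed
  have "opt_value U (fst (\<omega> (min n k))) \<le> ennreal C"
  proof (cases "n < k")
    case True
    with impulses U_bounds show ?thesis by (fastforce intro: ennreal_leI)
  qed (use stop U_bounds in \<open>auto simp: min_absorb2 intro: ennreal_leI\<close>)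
  then have "running_value U Ki ci n \<omega> \<le> ennreal (\<Sum>j<k. c j) + ennreal C"
    unfolding value_eq using c_sum[of "min n k"] by (intro add_mono ennreal_leI) auto
  also have "\<dots> \<le> ennreal (U (xbar \<omega>) + Ci ci \<omega>) + ennreal C"
    using U_bounds stop by (intro add_mono ennreal_leI) (auto simp: Ci)
  finally show "running_value U Ki ci n \<omega> \<le> ennreal (U (xbar \<omega>) + Ci ci \<omega>) + ennreal C" .
qed

section \<open>Expected value of a randomized intervention\<close>

locale impulse_supersolution = strategic_measure_kernel +
  fixes U and ci and C :: real
  assumes Y_full: "emeasure P (Yset Xs Ai) = 1"
    and initial_state: "z \<in> Xs"
    and U_meas: "U \<in> borel_measurable (XM Xs)"
    and U_bounds: "\<forall>x\<in>Xs. 0 \<le> U x \<and> U x \<le> C"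
    and ci_meas: "(\<lambda>p. ci (fst p) (snd p)) \<in> borel_measurable (restrict_space borel (Kset Xs Aix))"
    and ci_nonneg: "\<forall>(x, a)\<in>Kset Xs Aix. 0 \<le> ci x a"
    and impulse_ineq: "\<forall>(x, a)\<in>Kset Xs Aix. U x \<le> (\<integral>u. U u \<partial>Q x a) + ci x a"
begin

abbreviation "Z n \<equiv> running_value U Ki ci n"

lemma measurable_Z: "Z n \<in> borel_measurable P"
  using measurable_running_value[OF Ki_borel ci_meas U_meas] by (simp add: measurable_P_iff)

lemma continue_value_le_transition:
  assumes admissible: "\<forall>x a. p = (Some x, Some a) \<longrightarrow> (x, a) \<in> Ki"
  shows "continue_value U p \<le> impulse_cost Ki ci p
      + ennreal (of_bool (snd p \<noteq> None)) * (\<integral>\<^sup>+u. opt_value U u \<partial>imp_trans Xs Ki Q p)"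
proof (cases "\<exists>x a. p = (Some x, Some a)")
  case True
  then obtain x a where p: "p = (Some x, Some a)" by blast
  with admissible have K: "(x, a) \<in> Ki" by blast
  interpret Q: prob_space "Q x a" using Q_prob K by auto
  have U_Q: "U \<in> borel_measurable (Q x a)"
    using U_meas measurable_cong_sets[OF kernel_on_sets[OF Q_kernel K] refl] by blast
  have U_Q_bounds: "AE u in Q x a. 0 \<le> U u \<and> U u \<le> C"
    using U_bounds kernel_on_space[OF Q_kernel K] by (auto intro!: AE_I2)
  have "(\<integral>\<^sup>+u. opt_value U u \<partial>imp_trans Xs Ki Q p) = (\<integral>\<^sup>+u. ennreal (U u) \<partial>Q x a)"
    using K measurable_opt_value[OF U_meas]
    by (simp add: p imp_trans_def nn_integral_distr[OF measurable_Some_kernel[OF Q_kernel K]])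
  also have "\<dots> = ennreal (\<integral>u. U u \<partial>Q x a)"
    using U_Q U_Q_bounds by (intro nn_integral_eq_integral Q.integrable_const_bound[where B=C]) auto
  finally have "(\<integral>\<^sup>+u. opt_value U u \<partial>imp_trans Xs Ki Q p) = ennreal (\<integral>u. U u \<partial>Q x a)" .
  moreover have "0 \<le> (\<integral>u. U u \<partial>Q x a)"
    using U_Q_bounds by (intro integral_nonneg_AE) auto
  moreover have "0 \<le> ci x a"
    using ci_nonneg K by auto
  moreover have "U x \<le> (\<integral>u. U u \<partial>Q x a) + ci x a"
    using impulse_ineq K by auto
  then have "ennreal (U x) \<le> ennreal (ci x a + (\<integral>u. U u \<partial>Q x a))"
    by (intro ennreal_leI) linarith
  ultimately show ?thesis
    using K by (simp add: p continue_value_def impulse_cost_def)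
next
  case False
  then have "continue_value U p = 0"
    by (cases p) (auto simp: continue_value_def split: option.splits)
  then show ?thesis by simp
qed

lemma nn_integral_continue_value_le:
  "(\<integral>\<^sup>+\<omega>. continue_value U (\<omega> n) \<partial>P)
    \<le> (\<integral>\<^sup>+\<omega>. impulse_cost Ki ci (\<omega> n) \<partial>P) + (\<integral>\<^sup>+\<omega>. opt_value U (fst (\<omega> (Suc n))) \<partial>P)"
proof -
  define T where "T \<omega> = (\<integral>\<^sup>+u. opt_value U u \<partial>transition n \<omega>)" for \<omega>
  have active: "(\<lambda>\<omega>. of_bool (snd (\<omega> n) \<noteq> None) :: real) \<in> borel_measurable P"
    by (rule measurable_compose[OF pred_active measurable_of_bool])
  have cost: "(\<lambda>\<omega>. impulse_cost Ki ci (\<omega> n)) \<in> borel_measurable P"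
    by (rule measurable_compose[OF measurable_step measurable_impulse_cost[OF Ki_borel ci_meas]])
  have T: "T \<in> borel_measurable P"
    unfolding T_def by (rule measurable_compose[OF measurable_transition
          nn_integral_measurable_subprob_algebra[OF measurable_opt_value[OF U_meas]]])
  have "(\<integral>\<^sup>+\<omega>. continue_value U (\<omega> n) \<partial>P)
      \<le> (\<integral>\<^sup>+\<omega>. impulse_cost Ki ci (\<omega> n) + ennreal (of_bool (snd (\<omega> n) \<noteq> None)) * T \<omega> \<partial>P)"
    using AE_admissible_impulse[of n]
    by (intro nn_integral_mono_AE) (auto simp: T_def elim!: eventually_mono
        intro: order_trans[OF continue_value_le_transition])
  also have "\<dots> = (\<integral>\<^sup>+\<omega>. impulse_cost Ki ci (\<omega> n) \<partial>P)
      + (\<integral>\<^sup>+\<omega>. ennreal (of_bool (snd (\<omega> n) \<noteq> None)) * T \<omega> \<partial>P)"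
    using cost T measurable_compose[OF active measurable_ennreal]
    by (intro nn_integral_add borel_measurable_times_ennreal) auto
  also have "(\<integral>\<^sup>+\<omega>. ennreal (of_bool (snd (\<omega> n) \<noteq> None)) * T \<omega> \<partial>P)
      = (\<integral>\<^sup>+\<omega>. ennreal (of_bool (snd (\<omega> n) \<noteq> None)) * opt_value U (fst (\<omega> (Suc n))) \<partial>P)"
    unfolding T_def
    by (rule nn_integral_next_state[OF active _ _ measurable_opt_value[OF U_meas], symmetric]) auto
  also have "\<dots> \<le> (\<integral>\<^sup>+\<omega>. opt_value U (fst (\<omega> (Suc n))) \<partial>P)"
    by (intro nn_integral_mono) simp
  finally show ?thesis
    by (simp add: add_left_mono)
qed

lemma nn_integral_Z_le_Suc: "(\<integral>\<^sup>+\<omega>. Z n \<omega> \<partial>P) \<le> (\<integral>\<^sup>+\<omega>. Z (Suc n) \<omega> \<partial>P)"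
proof -
  have continue: "(\<lambda>\<omega>. continue_value U (\<omega> n)) \<in> borel_measurable P"
    by (rule measurable_compose[OF measurable_step measurable_continue_value[OF U_meas]])
  have cost: "(\<lambda>\<omega>. impulse_cost Ki ci (\<omega> n)) \<in> borel_measurable P"
    by (rule measurable_compose[OF measurable_step measurable_impulse_cost[OF Ki_borel ci_meas]])
  have next_value: "(\<lambda>\<omega>. opt_value U (fst (\<omega> (Suc n)))) \<in> borel_measurable P"
    by (rule measurable_compose[OF measurable_state measurable_opt_value[OF U_meas]])
  have "(\<integral>\<^sup>+\<omega>. continue_value U (\<omega> n) \<partial>P) \<le> (\<integral>\<^sup>+\<omega>. ennreal C \<partial>P)"
  proof (rule nn_integral_mono)
    fix \<omega> assume "\<omega> \<in> space P"
    then have "fst (\<omega> n) \<in> space states"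
      by (rule measurable_space[OF measurable_state])
    then show "continue_value U (\<omega> n) \<le> ennreal C"
      using U_bounds by (auto simp: continue_value_def space_optM XM_def space_restrict_space intro: ennreal_leI)
  qed
  then have finite: "(\<integral>\<^sup>+\<omega>. continue_value U (\<omega> n) \<partial>P) \<noteq> \<infinity>"
    by (auto simp: emeasure_space_1 top_unique)
  have "(\<integral>\<^sup>+\<omega>. Z n \<omega> \<partial>P) + (\<integral>\<^sup>+\<omega>. continue_value U (\<omega> n) \<partial>P)
      \<le> (\<integral>\<^sup>+\<omega>. Z n \<omega> \<partial>P)
        + ((\<integral>\<^sup>+\<omega>. impulse_cost Ki ci (\<omega> n) \<partial>P) + (\<integral>\<^sup>+\<omega>. opt_value U (fst (\<omega> (Suc n))) \<partial>P))"
    by (rule add_left_mono[OF nn_integral_continue_value_le])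
  also have "\<dots> = (\<integral>\<^sup>+\<omega>. Z n \<omega> + impulse_cost Ki ci (\<omega> n) + opt_value U (fst (\<omega> (Suc n))) \<partial>P)"
    using measurable_Z cost next_value by (simp add: nn_integral_add add.assoc)
  also have "\<dots> = (\<integral>\<^sup>+\<omega>. Z (Suc n) \<omega> + continue_value U (\<omega> n) \<partial>P)"
    by (simp add: running_value_Suc)
  also have "\<dots> = (\<integral>\<^sup>+\<omega>. Z (Suc n) \<omega> \<partial>P) + (\<integral>\<^sup>+\<omega>. continue_value U (\<omega> n) \<partial>P)"
    using measurable_Z continue by (simp add: nn_integral_add)
  finally show ?thesis
    using finite by (simp add: ennreal_add_left_cancel_le add.commute)
qed

lemma nn_integral_Z_ge: "ennreal (U z) \<le> (\<integral>\<^sup>+\<omega>. Z n \<omega> \<partial>P)"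
proof (induction n)
  case 0
  have "AE \<omega> in P. fst (\<omega> 0) = Some z"
    using strategic by (simp add: is_strategic_def)
  then have "(\<integral>\<^sup>+\<omega>. Z 0 \<omega> \<partial>P) = (\<integral>\<^sup>+\<omega>. ennreal (U z) \<partial>P)"
    by (intro nn_integral_cong_AE) (auto simp: running_value_def elim!: eventually_mono)
  then show ?case
    by (simp add: emeasure_space_1)
next
  case (Suc n)
  then show ?case
    using nn_integral_Z_le_Suc[of n] by (rule order_trans)
qed

lemma AE_Yset_admissible:
  "AE \<omega> in P. \<omega> \<in> Yset Xs Ai \<and> (\<forall>j x a. \<omega> j = (Some x, Some a) \<longrightarrow> (x, a) \<in> Ki)"
proof -
  have "Yset Xs Ai \<in> sets P"
    using Y_full emeasure_notin_sets by fastforce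
  then have "AE \<omega> in P. \<omega> \<in> Yset Xs Ai"
    using Y_full by (simp add: AE_in_set_eq_1 emeasure_eq_measure)
  moreover have "AE \<omega> in P. \<forall>j x a. \<omega> j = (Some x, Some a) \<longrightarrow> (x, a) \<in> Ki"
    using AE_admissible_impulse by (simp add: AE_all_countable)
  ultimately show ?thesis
    by eventually_elim auto
qed

text \<open>xbar and Ci need not be measurable, hence the measurable version g.\<close>

lemma terminal_value_ge:
  "\<exists>g\<in>borel_measurable P. (AE \<omega> in P. g \<omega> = U (xbar \<omega>) + Ci ci \<omega> \<and> 0 \<le> g \<omega>)
      \<and> ennreal (U z) \<le> (\<integral>\<^sup>+\<omega>. ennreal (g \<omega>) \<partial>P)"
proof -
  define G where "G \<omega> = limsup (\<lambda>n. Z n \<omega>)" for \<omega>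
  have G: "G \<in> borel_measurable P"
    unfolding G_def using measurable_Z by (rule borel_measurable_limsup)
  have AE_G: "AE \<omega> in P. G \<omega> = ennreal (U (xbar \<omega>) + Ci ci \<omega>) \<and> 0 \<le> U (xbar \<omega>) + Ci ci \<omega>
      \<and> (\<forall>n. Z n \<omega> \<le> G \<omega> + ennreal C)"
    using AE_Yset_admissible
  proof eventually_elim
    case (elim \<omega>)
    note Y = running_value_Yset[OF elim[THEN conjunct1] elim[THEN conjunct2] ci_nonneg U_bounds]
    have "G \<omega> = ennreal (U (xbar \<omega>) + Ci ci \<omega>)"
      unfolding G_def using Y(2) by (intro lim_imp_Limsup tendsto_eventually) simp_all
    with Y(1,3) show ?case
      by simp
  qed
  have "ennreal (U z) \<le> limsup (\<lambda>n. \<integral>\<^sup>+\<omega>. Z n \<omega> \<partial>P)"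
    using nn_integral_Z_ge by (intro le_Limsup) simp_all
  also have "\<dots> \<le> (\<integral>\<^sup>+\<omega>. G \<omega> \<partial>P)"
    unfolding G_def using measurable_Z AE_G[unfolded G_def]
    by (intro limsup_nn_integral_le[where c=C]) (auto elim!: eventually_mono)
  finally have "ennreal (U z) \<le> (\<integral>\<^sup>+\<omega>. G \<omega> \<partial>P)" .
  moreover have "(\<integral>\<^sup>+\<omega>. ennreal (enn2real (G \<omega>)) \<partial>P) = (\<integral>\<^sup>+\<omega>. G \<omega> \<partial>P)"
    using AE_G by (intro nn_integral_cong_AE) (auto elim!: eventually_mono)
  moreover have "AE \<omega> in P. enn2real (G \<omega>) = U (xbar \<omega>) + Ci ci \<omega> \<and> 0 \<le> enn2real (G \<omega>)"
    using AE_G by eventually_elim simp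
  moreover have "(\<lambda>\<omega>. enn2real (G \<omega>)) \<in> borel_measurable P"
    using G by (rule borel_measurable_enn2real)
  ultimately show ?thesis
    by (intro bexI[of _ "\<lambda>\<omega>. enn2real (G \<omega>)"] conjI) simp_all
qed

end

lemma ext_integral_ge_shifted:
  fixes F g :: "'b \<Rightarrow> real"
  assumes M: "prob_space M" and g: "g \<in> borel_measurable M"
    and AE_g: "AE \<omega> in M. g \<omega> = F \<omega> + c \<and> 0 \<le> g \<omega>"
    and c: "0 \<le> c" and vc: "0 \<le> v + c"
    and lower: "ennreal (v + c) \<le> (\<integral>\<^sup>+\<omega>. ennreal (g \<omega>) \<partial>M)"
  shows "ereal v \<le> ext_integral M (\<lambda>\<omega>. ereal (F \<omega>))"
proof -
  interpret M: prob_space M by (rule M)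
  define p where "p = (\<integral>\<^sup>+\<omega>. ennreal (g \<omega> - c) \<partial>M)"
  define m where "m = (\<integral>\<^sup>+\<omega>. ennreal (c - g \<omega>) \<partial>M)"
  have "(\<integral>\<^sup>+\<omega>. e2ennreal (ereal (F \<omega>)) \<partial>M) = p" "(\<integral>\<^sup>+\<omega>. e2ennreal (- ereal (F \<omega>)) \<partial>M) = m"
    unfolding p_def m_def using AE_g
    by (auto intro!: nn_integral_cong_AE simp: e2ennreal_ereal elim!: eventually_mono)
  then have ext: "ext_integral M (\<lambda>\<omega>. ereal (F \<omega>)) = enn2ereal p - enn2ereal m"
    by (simp add: ext_integral_def)
  have split: "ennreal (g \<omega>) + ennreal (c - g \<omega>) = ennreal (g \<omega> - c) + ennreal c" if "0 \<le> g \<omega>" for \<omega>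
    using that c by (cases "g \<omega> \<le> c") (simp_all add: ennreal_neg flip: ennreal_plus)
  have "(\<integral>\<^sup>+\<omega>. ennreal (g \<omega>) \<partial>M) + m = (\<integral>\<^sup>+\<omega>. ennreal (g \<omega>) + ennreal (c - g \<omega>) \<partial>M)"
    unfolding m_def using g by (subst nn_integral_add) auto
  also have "\<dots> = (\<integral>\<^sup>+\<omega>. ennreal (g \<omega> - c) + ennreal c \<partial>M)"
    by (intro nn_integral_cong_AE eventually_mono[OF AE_g]) (blast intro: split)
  also have "\<dots> = p + ennreal c"
    unfolding p_def using g by (subst nn_integral_add) (auto simp: M.emeasure_space_1)
  finally have balance: "(\<integral>\<^sup>+\<omega>. ennreal (g \<omega>) \<partial>M) + m = p + ennreal c" .
  have "m \<le> (\<integral>\<^sup>+\<omega>. ennreal c \<partial>M)"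
    unfolding m_def by (intro nn_integral_mono_AE eventually_mono[OF AE_g] ennreal_leI) linarith
  then have "m \<le> ennreal c"
    by (simp add: M.emeasure_space_1)
  then obtain m' where m': "m = ennreal m'" "0 \<le> m'" "m' \<le> c"
    using c by (cases m rule: ennreal_cases) (auto simp: top_unique)
  have key: "ennreal (v + c) + m \<le> p + ennreal c"
    using lower balance by (metis add_right_mono)
  show ?thesis
  proof (cases "p = \<infinity>")
    case False
    then obtain p' where p': "p = ennreal p'" "0 \<le> p'"
      by (cases p rule: ennreal_cases) auto
    have "ennreal (v + c + m') \<le> ennreal (p' + c)"
      using key m' p' vc c by (simp del: ennreal_plus add: ennreal_plus[symmetric])
    then have "v + c + m' \<le> p' + c"
      using p' c by (subst (asm) ennreal_le_iff) auto
    then show ?thesis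
      using p' m' by (simp add: ext)
  qed (use m' in \<open>simp add: ext\<close>)
qed

lemma integral_le_ext_integral:
  fixes V :: "'b \<Rightarrow> real" and E :: "'b \<Rightarrow> ereal"
  assumes M: "finite_measure M" and V: "V \<in> borel_measurable M"
    and V_bound: "\<And>z. z \<in> space M \<Longrightarrow> \<bar>V z\<bar> \<le> B"
    and V_le_E: "\<And>z. z \<in> space M \<Longrightarrow> ereal (V z) \<le> E z"
  shows "ereal (\<integral>z. V z \<partial>M) \<le> ext_integral M E"
proof -
  interpret M: finite_measure M by (rule M)
  have int: "integrable M V"
    using V V_bound by (intro M.integrable_const_bound[where B=B]) (auto intro!: AE_I2)
  then have finite: "(\<integral>\<^sup>+z. ennreal (V z) \<partial>M) \<noteq> \<top>" "(\<integral>\<^sup>+z. ennreal (- V z) \<partial>M) \<noteq> \<top>"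
    by (auto simp: real_integrable_def)
  have "ereal (\<integral>z. V z \<partial>M) = enn2ereal (\<integral>\<^sup>+z. ennreal (V z) \<partial>M) - enn2ereal (\<integral>\<^sup>+z. ennreal (- V z) \<partial>M)"
    using finite unfolding real_lebesgue_integral_def[OF int]
    by (cases "(\<integral>\<^sup>+z. ennreal (V z) \<partial>M)" rule: ennreal_cases;
        cases "(\<integral>\<^sup>+z. ennreal (- V z) \<partial>M)" rule: ennreal_cases) auto
  also have "\<dots> \<le> enn2ereal (\<integral>\<^sup>+z. e2ennreal (E z) \<partial>M) - enn2ereal (\<integral>\<^sup>+z. e2ennreal (- E z) \<partial>M)"
  proof (rule ereal_minus_mono)
    have "(\<integral>\<^sup>+z. ennreal (V z) \<partial>M) \<le> (\<integral>\<^sup>+z. e2ennreal (E z) \<partial>M)"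
      using V_le_E by (intro nn_integral_mono) (metis e2ennreal_ereal e2ennreal_mono)
    then show "enn2ereal (\<integral>\<^sup>+z. ennreal (V z) \<partial>M) \<le> enn2ereal (\<integral>\<^sup>+z. e2ennreal (E z) \<partial>M)"
      by (simp add: less_eq_ennreal.rep_eq)
    have "(\<integral>\<^sup>+z. e2ennreal (- E z) \<partial>M) \<le> (\<integral>\<^sup>+z. ennreal (- V z) \<partial>M)"
      using V_le_E by (intro nn_integral_mono)
        (metis e2ennreal_ereal e2ennreal_mono ereal_minus_le_minus uminus_ereal.simps(1))
    then show "enn2ereal (\<integral>\<^sup>+z. e2ennreal (- E z) \<partial>M) \<le> enn2ereal (\<integral>\<^sup>+z. ennreal (- V z) \<partial>M)"
      by (simp add: less_eq_ennreal.rep_eq)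
  qed
  finally show ?thesis
    unfolding ext_integral_def .
qed

lemma integrable_kernel:
  fixes V :: "'x::topological_space \<Rightarrow> real"
  assumes "kernel_on Xs K k" "(x, a) \<in> K" "V \<in> borel_measurable (XM Xs)" "\<forall>y\<in>Xs. \<bar>V y\<bar> \<le> B"
  shows "integrable (k x a) V"
proof -
  interpret finite_measure "k x a"
    using assms(1,2) by (auto simp: kernel_on_def)
  show ?thesis
    using assms measurable_cong_sets[OF kernel_on_sets[OF assms(1,2)] refl] kernel_on_space[OF assms(1,2)]
    by (intro integrable_const_bound[where B=B]) (auto intro!: AE_I2)
qed

lemma integral_kernel_le_ext_integral:
  fixes V :: "'x::topological_space \<Rightarrow> real"
  assumes k: "kernel_on Xs K k" "(x, a) \<in> K" and V: "V \<in> borel_measurable (XM Xs)"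
    and V_bound: "\<forall>y\<in>Xs. \<bar>V y\<bar> \<le> B" and V_le_E: "\<forall>y\<in>Xs. ereal (V y) \<le> E y"
  shows "ereal (\<integral>y. V y \<partial>k x a) \<le> ext_integral (k x a) E"
  using k V V_bound V_le_E measurable_cong_sets[OF kernel_on_sets[OF k] refl] kernel_on_space[OF k]
  by (intro integral_le_ext_integral[where B=B]) (auto simp: kernel_on_def)

lemma (in strategic_measure_kernel) ext_integral_intervention_ge:
  assumes Y_full: "emeasure P (Yset Xs Ai) = 1" and z: "z \<in> Xs"
    and V: "V \<in> borel_measurable (XM Xs)" and V_bound: "\<forall>x\<in>Xs. \<bar>V x\<bar> \<le> B"
    and ci: "(\<lambda>p. ci (fst p) (snd p)) \<in> borel_measurable (restrict_space borel Ki)"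
    and ci_nonneg: "\<forall>(x, a)\<in>Ki. 0 \<le> ci x a"
    and impulse_ineq: "\<forall>(x, a)\<in>Ki. V x \<le> (\<integral>u. V u \<partial>Q x a) + ci x a"
  shows "ereal (V z) \<le> ext_integral P (\<lambda>y. ereal (V (xbar y) + Ci ci y))"
proof -
  have shifted_ineq: "V x + B \<le> (\<integral>u. V u + B \<partial>Q x a) + ci x a" if K: "(x, a) \<in> Ki" for x a
  proof -
    interpret Q: prob_space "Q x a"
      using Q_prob K by auto
    show ?thesis
      using impulse_ineq K integrable_kernel[OF Q_kernel K V V_bound] by (auto simp: Q.prob_space)
  qed
  interpret impulse_supersolution Xs Ai Aix Q b z P "\<lambda>x. V x + B" ci "2 * B"
    using Y_full z V V_bound ci ci_nonneg shifted_ineq by unfold_locales (auto simp: abs_le_iff)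
  obtain g where "g \<in> borel_measurable P"
    and "AE \<omega> in P. g \<omega> = V (xbar \<omega>) + B + Ci ci \<omega> \<and> 0 \<le> g \<omega>"
    and "ennreal (V z + B) \<le> (\<integral>\<^sup>+\<omega>. ennreal (g \<omega>) \<partial>P)"
    using terminal_value_ge by blast
  moreover have "0 \<le> B" "0 \<le> V z + B"
    using V_bound z by (auto simp: abs_le_iff)
  ultimately show ?thesis
    by (intro ext_integral_ge_shifted[OF prob_space_axioms, of g _ B]) (auto simp: ac_simps elim!: eventually_mono)
qed

lemma nonneg_of_min_INF_eq_0:
  fixes f g :: "'b \<Rightarrow> ereal"
  assumes "min (INF a\<in>A. f a) (INF b\<in>B. g b) = 0"
  shows "a \<in> A \<Longrightarrow> 0 \<le> f a" and "b \<in> B \<Longrightarrow> 0 \<le> g b"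
  using assms by (metis INF_lower min.bounded_iff order_refl order_trans)+

lemma rand_intervention_value_ge:
  fixes Xs :: "'x::second_countable_topology set" and Ai :: "'a::second_countable_topology set"
  assumes beta: "rand_intervention Xs Ai Aix Q \<beta>" and z: "z \<in> Xs"
    and Ki: "Kset Xs Aix \<in> sets borel" and Q: "kernel_on Xs (Kset Xs Aix) Q"
    and Q_prob: "\<forall>(x, a)\<in>Kset Xs Aix. prob_space (Q x a)"
    and V: "V \<in> borel_measurable (XM Xs)" and V_bound: "\<forall>x\<in>Xs. \<bar>V x\<bar> \<le> B"
    and ci: "(\<lambda>p. ci (fst p) (snd p)) \<in> borel_measurable (restrict_space borel (Kset Xs Aix))"
    and ci_nonneg: "\<forall>(x, a)\<in>Kset Xs Aix. 0 \<le> ci x a"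
    and impulse_ineq: "\<forall>(x, a)\<in>Kset Xs Aix. V x \<le> (\<integral>u. V u \<partial>Q x a) + ci x a"
  shows "ereal (V z) \<le> ext_integral (\<beta> z) (\<lambda>y. ereal (V (xbar y) + Ci ci y))"
proof -
  obtain b where "is_policy Xs Ai Aix b" "is_strategic Xs Ai (Kset Xs Aix) Q b z (\<beta> z)"
    and Y_full: "emeasure (\<beta> z) (Yset Xs Ai) = 1"
    using beta z unfolding rand_intervention_def by blast
  then interpret strategic_measure_kernel Xs Ai Aix Q b z "\<beta> z"
    using Ki Q Q_prob by unfold_locales
  show ?thesis
    using Y_full z V V_bound ci ci_nonneg impulse_ineq by (rule ext_integral_intervention_ge)
qed

theorem lemma4p6:
  fixes Xs :: "'x::polish_space set" and Ag Ai :: "'a::polish_space set"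
    and Agx Aix :: "'x \<Rightarrow> 'a set"
    and qbar Q :: "'x \<Rightarrow> 'a \<Rightarrow> 'x measure"
    and Cg ci :: "'x \<Rightarrow> 'a \<Rightarrow> real"
    and \<eta> :: real
    and V :: "'x \<Rightarrow> real"
    and \<beta> :: "'x \<Rightarrow> ('x, 'a) traj measure"
  assumes Xs: "Xs \<in> sets borel"
    and Ag: "Ag \<in> sets borel" and Ai: "Ai \<in> sets borel" and disj: "Ag \<inter> Ai = {}"
    and Agx: "\<forall>x\<in>Xs. Agx x \<subseteq> Ag" and Aix: "\<forall>x\<in>Xs. Aix x \<subseteq> Ai"
    and Kg_meas: "Kset Xs Agx \<in> sets borel" and Ki_meas: "Kset Xs Aix \<in> sets borel"
    and qbar: "kernel_on Xs (Kset Xs Agx) qbar"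
    and qbar_diag: "\<forall>(x, a)\<in>Kset Xs Agx. emeasure (qbar x a) {x} = 0"
    and Q: "kernel_on Xs (Kset Xs Aix) Q"
    and Q_prob: "\<forall>(x, a)\<in>Kset Xs Aix. prob_space (Q x a)"
    and Cg_meas: "(\<lambda>p. Cg (fst p) (snd p)) \<in> borel_measurable (restrict_space borel (Kset Xs Agx))"
    and ci_meas: "(\<lambda>p. ci (fst p) (snd p)) \<in> borel_measurable (restrict_space borel (Kset Xs Aix))"
    and eta: "\<eta> > 0"
    and A: "AssumptionA Xs Agx Aix qbar Cg ci"
    and C: "AssumptionC1 Xs Ag Ai Agx Aix qbar Q Cg ci \<or> AssumptionC2 Xs Ag Ai Agx Aix qbar Q Cg ci"
    and beta: "rand_intervention Xs Ai Aix Q \<beta>"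
    and V_meas: "V \<in> borel_measurable (XM Xs)"
    and V_bdd: "bounded (V ` Xs)"
    and bellman: "\<forall>x\<in>Xs.
        min (INF a\<in>Agx x. ereal (- \<eta> * V x + (\<integral>z. V z \<partial>qbar x a)
                                  - V x * measure (qbar x a) Xs + Cg x a))
            (INF a\<in>Aix x. ereal (- V x + (\<integral>z. V z \<partial>Q x a) + ci x a)) = 0"
  shows "\<forall>(x, a)\<in>Kset Xs Agx.
           ereal (- \<eta> * V x)
           + ext_integral (qbar x a)
               (\<lambda>z. ext_integral (\<beta> z) (\<lambda>y. ereal (V (xbar y) + Ci ci y)))
           - ereal (V x * measure (qbar x a) Xs) + ereal (Cg x a) \<ge> 0"
proof -
  obtain B where V_bound: "\<forall>x\<in>Xs. \<bar>V x\<bar> \<le> B"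
    using V_bdd by (auto simp: bounded_iff)
  have ci_nonneg: "\<forall>(x, a)\<in>Kset Xs Aix. 0 \<le> ci x a"
    using A by (auto simp: AssumptionA_def)
  have impulse_ineq: "\<forall>(x, a)\<in>Kset Xs Aix. V x \<le> (\<integral>u. V u \<partial>Q x a) + ci x a"
  proof (intro ballI, clarify)
    fix x a assume "(x, a) \<in> Kset Xs Aix"
    then have "0 \<le> - V x + (\<integral>u. V u \<partial>Q x a) + ci x a"
      using nonneg_of_min_INF_eq_0(2)[OF bellman[rule_format]] by (auto simp: Kset_def)
    then show "V x \<le> (\<integral>u. V u \<partial>Q x a) + ci x a"
      by linarith
  qed
  show ?thesis
  proof (intro ballI, clarify)
    fix x a assume K: "(x, a) \<in> Kset Xs Agx"
    let ?E = "\<lambda>z. ext_integral (\<beta> z) (\<lambda>y. ereal (V (xbar y) + Ci ci y))"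
    have "0 \<le> - \<eta> * V x + (\<integral>z. V z \<partial>qbar x a) - V x * measure (qbar x a) Xs + Cg x a"
      using nonneg_of_min_INF_eq_0(1)[OF bellman[rule_format]] K by (auto simp: Kset_def)
    moreover have "ereal (\<integral>z. V z \<partial>qbar x a) \<le> ext_integral (qbar x a) ?E"
      using rand_intervention_value_ge[OF beta _ Ki_meas Q Q_prob V_meas V_bound ci_meas ci_nonneg impulse_ineq]
      by (intro integral_kernel_le_ext_integral[OF qbar K V_meas V_bound]) blast
    ultimately show "0 \<le> ereal (- \<eta> * V x) + ext_integral (qbar x a) ?E
        - ereal (V x * measure (qbar x a) Xs) + ereal (Cg x a)"
      by (cases "ext_integral (qbar x a) ?E") auto
  qed
qed

end
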